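(* Let $\mathcal{H}$ be a Hilbert space and let $\mathbf{L}_1,\mathbf{L}_2:\mathcal{H}^n\to\mathcal{H}^n$ be invertible and lower triangular $n\times n$ matrices of operators on $\mathcal{H}$. If $$\mathbf{L}_1\mathbf{L}_1^*=\mathbf{L}_2\mathbf{L}_2^*,$$ then $\mathbf{L}_2=\mathbf{L}_1\,\mathrm{diag}(\mathbf{L}_1)^{-1}\,\mathrm{diag}(\mathbf{L}_2)$.
   Context: For an $n\times n$ matrix of operators $\mathbf{L}$, $\mathrm{diag}(\mathbf{L})$ denotes the diagonal matrix of operators with the same diagonal entries as $\mathbf{L}$; $^*$ denotes the Hilbert space adjoint.
   Formalization: $\mathcal{H}$ is a real Hilbert space, and the inverses of $\mathbf{L}_1$ and $\mathbf{L}_2$ are themselves lower triangular matrices of operators. Apart from conventions, each condition added here is assumed in the paper as well or is needed for the statement above to hold. *)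

theory Defs
  imports "HOL-Analysis.Analysis"
begin

(* Operators on a (real) Hilbert space 'a: bounded linear maps 'a =>L 'a.
  An n x n matrix of operators is a function nat => nat => operator,
  only the entries with indices < n being relevant. *)

type_synonym 'a opmat = "nat \<Rightarrow> nat \<Rightarrow> ('a \<Rightarrow>\<^sub>L 'a)"

definition adj :: "('a::{real_inner,complete_space} \<Rightarrow>\<^sub>L 'a) \<Rightarrow> ('a \<Rightarrow>\<^sub>L 'a)" where
  "adj A = (THE B. \<forall>x y. inner (blinfun_apply A x) y = inner x (blinfun_apply B y))"

definition opmat_mult :: "nat \<Rightarrow> 'a::real_normed_vector opmat \<Rightarrow> 'a opmat \<Rightarrow> 'a opmat" where
  "opmat_mult n L M = (\<lambda>i j. \<Sum>k<n. L i k o\<^sub>L M k j)"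

definition opmat_id :: "'a::real_normed_vector opmat" where
  "opmat_id = (\<lambda>i j. if i = j then id_blinfun else 0)"

definition opmat_adj :: "'a::{real_inner,complete_space} opmat \<Rightarrow> 'a opmat" where
  "opmat_adj L = (\<lambda>i j. adj (L j i))"

definition opmat_diag :: "'a::real_normed_vector opmat \<Rightarrow> 'a opmat" where
  "opmat_diag L = (\<lambda>i j. if i = j then L i i else 0)"

definition opmat_eq :: "nat \<Rightarrow> 'a::real_normed_vector opmat \<Rightarrow> 'a opmat \<Rightarrow> bool" where
  "opmat_eq n L M \<longleftrightarrow> (\<forall>i<n. \<forall>j<n. L i j = M i j)"

definition lower_triangular :: "nat \<Rightarrow> 'a::real_normed_vector opmat \<Rightarrow> bool" where
  "lower_triangular n L \<longleftrightarrow> (\<forall>i<n. \<forall>j<n. i < j \<longrightarrow> L i j = 0)"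

definition opmat_inverse :: "nat \<Rightarrow> 'a::real_normed_vector opmat \<Rightarrow> 'a opmat \<Rightarrow> bool" where
  "opmat_inverse n L M \<longleftrightarrow> opmat_eq n (opmat_mult n L M) opmat_id \<and> opmat_eq n (opmat_mult n M L) opmat_id"

definition invertible_lower_triangular :: "nat \<Rightarrow> 'a::real_normed_vector opmat \<Rightarrow> bool" where
  "invertible_lower_triangular n L \<longleftrightarrow> lower_triangular n L \<and>
     (\<exists>M. lower_triangular n M \<and> opmat_inverse n L M)"

end

theory Submission
  imports Defs
begin

(* With M1 the lower triangular inverse of L1, the matrix U = M1 L2 is invertible lower
   triangular and U U* = M1 L1 L1* M1* = I.  Hence U* = U^-1 is lower triangular as well,
   so U is diagonal: U = diag(M1) diag(L2), and L2 = L1 U = L1 diag(L1)^-1 diag(L2).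
   Since adj is defined by a definite description, all of this rests on the existence of
   adjoints, i.e. on the Riesz representation theorem: in a Hilbert space the unit ball is
   uniformly convex, so a bounded functional attains its norm on it, and the maximiser is
   orthogonal to the kernel. *)

section \<open>Riesz representation\<close>

lemma norm_diff_squared_le_if_norm_add_ge:
  fixes a b :: "'a::real_inner"
  assumes "norm a \<le> 1" "norm b \<le> 1" "2 - 2 * d \<le> norm (a + b)"
  shows "(norm (a - b))\<^sup>2 \<le> 8 * d"
proof -
  have parallelogram: "(norm (a - b))\<^sup>2 = 2 * (norm a)\<^sup>2 + 2 * (norm b)\<^sup>2 - (norm (a + b))\<^sup>2"
    by (simp add: power2_norm_eq_inner inner_add inner_diff inner_commute algebra_simps)
  have "(norm a)\<^sup>2 \<le> 1" "(norm b)\<^sup>2 \<le> 1"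
    using assms(1,2) by (auto simp: power_le_one)
  moreover have "4 - 8 * d \<le> (norm (a + b))\<^sup>2"
  proof (cases "d \<le> 1")
    case True
    then have "(2 - 2 * d)\<^sup>2 \<le> (norm (a + b))\<^sup>2"
      using assms(3) by (intro power_mono) auto
    moreover have "4 - 8 * d \<le> (2 - 2 * d)\<^sup>2"
      by (simp add: power2_eq_square algebra_simps)
    ultimately show ?thesis by linarith
  next
    case False
    then show ?thesis by (smt (verit) zero_le_power2)
  qed
  ultimately show ?thesis using parallelogram by linarith
qed

lemma onorm_approx_real:
  fixes f :: "'a::real_normed_vector \<Rightarrow> real"
  assumes f: "bounded_linear f" and "e > 0"
  obtains x where "norm x \<le> 1" "onorm f - e < f x"
proof -
  interpret f: bounded_linear f by fact
  have "\<exists>x. norm x \<le> 1 \<and> onorm f - e < f x"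
  proof (rule ccontr)
    assume "\<nexists>x. norm x \<le> 1 \<and> onorm f - e < f x"
    then have bound: "f x \<le> onorm f - e" if "norm x \<le> 1" for x
      using that by force
    have "\<bar>f x\<bar> \<le> (onorm f - e) * norm x" for x
    proof (cases "x = 0")
      case False
      define u where "u = x /\<^sub>R norm x"
      have "norm u = 1" using False by (simp add: u_def)
      then have "\<bar>f u\<bar> \<le> onorm f - e"
        using bound[of u] bound[of "- u"] by (simp add: f.neg abs_le_iff)
      moreover have "f x = norm x * f u"
        using False by (simp add: u_def f.scaleR)
      ultimately show ?thesis by (simp add: abs_mult mult.commute mult_left_mono)
    qed simp
    then have "onorm f \<le> onorm f - e"
      using bound[of 0] by (intro onorm_bound) auto
    then show False using \<open>e > 0\<close> by simp
  qed
  then show ?thesis using that by blast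
qed

lemma bounded_linear_attains_onorm:
  fixes f :: "'a::{real_inner,complete_space} \<Rightarrow> real"
  assumes f: "bounded_linear f"
  obtains z where "norm z \<le> 1" "f z = onorm f"
proof (cases "onorm f = 0")
  case True
  then show ?thesis using that[of 0] f by (simp add: linear_simps)
next
  case False
  interpret f: bounded_linear f by fact
  define c where "c = onorm f"
  have "c > 0" using False onorm_pos_le[OF f] by (simp add: c_def)
  have f_le: "f x \<le> c * norm x" for x
    using onorm[OF f, of x] by (simp add: c_def)
  have "\<exists>x. norm x \<le> 1 \<and> c - c / Suc k < f x" for k
    using onorm_approx_real[OF f, of "c / Suc k"] \<open>c > 0\<close> unfolding c_def by auto
  then obtain x where x: "\<And>k. norm (x k) \<le> 1" "\<And>k. c - c / Suc k < f (x k)"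
    by metis
  have "Cauchy x"
  proof (rule metric_CauchyI)
    fix e :: real assume "e > 0"
    obtain N :: nat where N: "8 / e\<^sup>2 < N"
      using reals_Archimedean2 by blast
    define d where "d = 1 / Suc N"
    have "\<forall>m\<ge>N. \<forall>k\<ge>N. dist (x m) (x k) < e"
    proof (intro allI impI)
      fix m k assume "m \<ge> N" "k \<ge> N"
      then have "c / Suc m \<le> c * d" "c / Suc k \<le> c * d"
        using \<open>c > 0\<close> by (simp_all add: d_def frac_le)
      then have "c * (2 - 2 * d) < f (x m + x k)"
        using x(2)[of m] x(2)[of k] by (simp add: f.add algebra_simps)
      also have "\<dots> \<le> c * norm (x m + x k)" by (rule f_le)
      finally have "2 - 2 * d \<le> norm (x m + x k)"
        using \<open>c > 0\<close> by simp
      then have "(norm (x m - x k))\<^sup>2 \<le> 8 * d"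
        by (rule norm_diff_squared_le_if_norm_add_ge[OF x(1) x(1)])
      also have "8 * d < e\<^sup>2"
        using N \<open>e > 0\<close> by (simp add: d_def field_simps add_strict_increasing)
      finally show "dist (x m) (x k) < e"
        using \<open>e > 0\<close> by (simp add: dist_norm power_less_imp_less_base)
    qed
    then show "\<exists>N. \<forall>m\<ge>N. \<forall>k\<ge>N. dist (x m) (x k) < e" by blast
  qed
  then obtain z where lim: "x \<longlonglongrightarrow> z"
    using Cauchy_convergent_iff convergent_def by blast
  have "norm z \<le> 1"
    using tendsto_norm[OF lim] by (rule LIMSEQ_le_const2) (use x(1) in auto)
  have "(\<lambda>k. c - c * inverse (Suc k)) \<longlonglongrightarrow> c - c * 0"
    by (intro tendsto_intros LIMSEQ_inverse_real_of_nat)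
  then have "(\<lambda>k. c - c / Suc k) \<longlonglongrightarrow> c"
    by (simp add: divide_inverse)
  then have "c \<le> f z"
    by (rule LIMSEQ_le[OF _ f.tendsto[OF lim]]) (use x(2) less_imp_le in auto)
  moreover have "f z \<le> c"
    using f_le[of z] \<open>norm z \<le> 1\<close> \<open>c > 0\<close> by (smt (verit) mult_left_le)
  ultimately show ?thesis using that \<open>norm z \<le> 1\<close> by (simp add: c_def)
qed

lemma orthogonal_if_norm_minimal:
  fixes y z :: "'a::real_inner"
  assumes "\<And>t. norm z \<le> norm (z + t *\<^sub>R y)"
  shows "inner z y = 0"
proof -
  define a b where "a = inner z y" and "b = inner y y"
  define s where "s = 1 / (b + 1)"
  have "b \<ge> 0" by (simp add: b_def)
  then have "s > 0" "s * b < 1" by (simp_all add: s_def field_simps)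
  have "(norm z)\<^sup>2 \<le> (norm (z + t *\<^sub>R y))\<^sup>2" for t
    using assms[of t] by (simp add: power_mono)
  then have "0 \<le> 2 * t * a + t * t * b" for t
    by (simp add: a_def b_def power2_norm_eq_inner inner_add inner_commute algebra_simps)
  from this[of "- a * s"] have "0 \<le> (s * (a * a)) * (s * b - 2)"
    by (simp add: algebra_simps)
  then have "s * (a * a) \<le> 0"
    using \<open>s * b < 1\<close> by (simp add: zero_le_mult_iff)
  then have "a * a \<le> 0"
    using \<open>s > 0\<close> by (simp add: mult_le_0_iff)
  then show ?thesis
    unfolding a_def by (metis mult_eq_0_iff order_antisym zero_le_square)
qed

theorem riesz_representation:
  fixes f :: "'a::{real_inner,complete_space} \<Rightarrow> real"
  assumes f: "bounded_linear f"
  obtains z where "\<And>x. f x = inner z x"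
proof -
  interpret f: bounded_linear f by fact
  obtain z where "norm z \<le> 1" and fz: "f z = onorm f"
    using bounded_linear_attains_onorm[OF f] .
  show ?thesis
  proof (cases "onorm f = 0")
    case True
    then show ?thesis using that[of 0] onorm_eq_0[OF f] by simp
  next
    case False
    define c where "c = onorm f"
    have "c > 0" using False onorm_pos_le[OF f] by (simp add: c_def)
    have f_le: "f x \<le> c * norm x" for x
      using onorm[OF f, of x] by (simp add: c_def)
    have "norm z = 1"
      using f_le[of z] fz \<open>norm z \<le> 1\<close> \<open>c > 0\<close> by (simp add: c_def)
    have "inner z y = 0" if "f y = 0" for y
    proof (rule orthogonal_if_norm_minimal)
      fix t
      have "c \<le> c * norm (z + t *\<^sub>R y)"
        using f_le[of "z + t *\<^sub>R y"] fz that by (simp add: c_def f.add f.scaleR)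
      then show "norm z \<le> norm (z + t *\<^sub>R y)"
        using \<open>c > 0\<close> \<open>norm z = 1\<close> by simp
    qed
    from this[of "v - (f v / c) *\<^sub>R z" for v]
    have "inner z v = f v / c" for v
      using fz \<open>c > 0\<close> \<open>norm z = 1\<close>
      by (simp add: c_def f.diff f.scaleR inner_diff_right dot_square_norm)
    then show ?thesis
      using that[of "c *\<^sub>R z"] \<open>c > 0\<close> by simp
  qed
qed

section \<open>Adjoints\<close>

lemma adjoint_exists:
  fixes A :: "'a::{real_inner,complete_space} \<Rightarrow>\<^sub>L 'b::real_inner"
  obtains B :: "'b \<Rightarrow>\<^sub>L 'a" where "\<And>x y. inner (A x) y = inner x (B y)"
proof -
  have "\<exists>z. \<forall>x. inner (A x) y = inner z x" for y
  proof -
    have "bounded_linear (\<lambda>x. inner (A x) y)"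
      by (intro bounded_linear_compose[OF bounded_linear_inner_left] blinfun.bounded_linear_right)
    then show ?thesis
      by (rule riesz_representation) blast
  qed
  then obtain g where "\<And>x y. inner (A x) y = inner (g y) x"
    by metis
  then have g: "\<And>x y. inner (A x) y = inner x (g y)"
    by (simp add: inner_commute)
  have g_add: "g (y + y') = g y + g y'" for y y'
    by (subst vector_eq_ldot[symmetric]) (simp add: g[symmetric] inner_add_right)
  have g_scaleR: "g (r *\<^sub>R y) = r *\<^sub>R g y" for r y
    by (subst vector_eq_ldot[symmetric]) (simp add: g[symmetric])
  have g_bound: "norm (g y) \<le> norm y * norm A" for y
  proof (cases "g y = 0")
    case False
    have "norm (g y) * norm (g y) = inner (A (g y)) y"
      by (simp add: g flip: power2_eq_square power2_norm_eq_inner)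
    also have "\<dots> \<le> norm (A (g y)) * norm y"
      by (rule norm_cauchy_schwarz)
    also have "\<dots> \<le> (norm y * norm A) * norm (g y)"
      using norm_blinfun[of A "g y"] by (simp add: mult.commute mult.left_commute mult_left_mono)
    finally show ?thesis
      using False by simp
  qed simp
  have "bounded_linear g"
    by (rule bounded_linear_intro[of _ "norm A"]) (simp_all add: g_add g_scaleR g_bound)
  then show ?thesis
    using that[of "Blinfun g"] by (simp add: bounded_linear_Blinfun_apply g)
qed

lemma inner_adj:
  fixes A :: "'a::{real_inner,complete_space} \<Rightarrow>\<^sub>L 'a"
  shows "inner (A x) y = inner x (adj A y)"
proof -
  have "\<exists>!B. \<forall>x y. inner (A x) y = inner x (blinfun_apply B y)"
  proof -
    obtain B :: "'a \<Rightarrow>\<^sub>L 'a" where B: "\<And>x y. inner (A x) y = inner x (B y)"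
      using adjoint_exists[of A] by blast
    moreover have "B' = B" if "\<forall>x y. inner (A x) y = inner x (B' y)" for B' :: "'a \<Rightarrow>\<^sub>L 'a"
    proof (rule blinfun_eqI)
      show "B' y = B y" for y
        using that by (subst vector_eq_ldot[symmetric]) (simp flip: B)
    qed
    ultimately show ?thesis by blast
  qed
  from theI'[OF this] show ?thesis unfolding adj_def by blast
qed

lemma adj_unique:
  fixes A B :: "'a::{real_inner,complete_space} \<Rightarrow>\<^sub>L 'a"
  assumes "\<And>x y. inner (A x) y = inner x (B y)"
  shows "adj A = B"
proof (rule blinfun_eqI)
  show "adj A y = B y" for y
    by (subst vector_eq_ldot[symmetric]) (simp add: assms flip: inner_adj)
qed

lemma adj_compose:
  fixes A B :: "'a::{real_inner,complete_space} \<Rightarrow>\<^sub>L 'a"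
  shows "adj (A o\<^sub>L B) = adj B o\<^sub>L adj A"
  by (rule adj_unique) (simp add: inner_adj)

lemma adj_sum:
  fixes F :: "'b \<Rightarrow> 'a::{real_inner,complete_space} \<Rightarrow>\<^sub>L 'a"
  shows "adj (\<Sum>k\<in>S. F k) = (\<Sum>k\<in>S. adj (F k))"
  by (rule adj_unique) (simp add: blinfun.sum_left inner_sum_left inner_sum_right inner_adj)

lemma adj_zero [simp]: "adj (0 :: 'a::{real_inner,complete_space} \<Rightarrow>\<^sub>L 'a) = 0"
  by (rule adj_unique) simp

lemma adj_id_blinfun [simp]:
  "adj (id_blinfun :: 'a::{real_inner,complete_space} \<Rightarrow>\<^sub>L 'a) = id_blinfun"
  by (rule adj_unique) simp

lemma adj_eq_0_iff [simp]:
  fixes A :: "'a::{real_inner,complete_space} \<Rightarrow>\<^sub>L 'a"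
  shows "adj A = 0 \<longleftrightarrow> A = 0"
proof
  assume "adj A = 0"
  then have "inner (A x) (A x) = 0" for x
    by (simp add: inner_adj)
  then show "A = 0" by (simp add: blinfun_eqI)
qed simp

section \<open>Operator matrices\<close>

lemma blinfun_compose_assoc: "(A o\<^sub>L B) o\<^sub>L C = A o\<^sub>L (B o\<^sub>L C)"
  by (rule blinfun_eqI) simp

lemma id_blinfun_compose [simp]: "id_blinfun o\<^sub>L A = A"
  by (rule blinfun_eqI) simp

lemma blinfun_compose_id [simp]: "A o\<^sub>L id_blinfun = A"
  by (rule blinfun_eqI) simp

lemma opmat_eq_refl: "opmat_eq n A A"
  by (simp add: opmat_eq_def)

lemma opmat_eq_sym: "opmat_eq n A B \<Longrightarrow> opmat_eq n B A"
  by (simp add: opmat_eq_def)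

lemma opmat_eq_trans [trans]: "opmat_eq n A B \<Longrightarrow> opmat_eq n B C \<Longrightarrow> opmat_eq n A C"
  by (simp add: opmat_eq_def)

lemma eq_opmat_eq_trans [trans]: "A = B \<Longrightarrow> opmat_eq n B C \<Longrightarrow> opmat_eq n A C"
  by simp

lemma opmat_eq_eq_trans [trans]: "opmat_eq n A B \<Longrightarrow> B = C \<Longrightarrow> opmat_eq n A C"
  by simp

lemma opmat_mult_assoc:
  "opmat_mult n (opmat_mult n A B) C = opmat_mult n A (opmat_mult n B C)"
proof (intro ext)
  fix i j
  have "opmat_mult n (opmat_mult n A B) C i j = (\<Sum>k<n. \<Sum>l<n. A i l o\<^sub>L B l k o\<^sub>L C k j)"
    by (simp add: opmat_mult_def bounded_bilinear.sum_left[OF bounded_bilinear_blinfun_compose])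
  also have "\<dots> = (\<Sum>l<n. \<Sum>k<n. A i l o\<^sub>L B l k o\<^sub>L C k j)"
    by (rule sum.swap)
  also have "\<dots> = opmat_mult n A (opmat_mult n B C) i j"
    by (simp add: opmat_mult_def blinfun_compose_assoc
        bounded_bilinear.sum_right[OF bounded_bilinear_blinfun_compose])
  finally show "opmat_mult n (opmat_mult n A B) C i j = opmat_mult n A (opmat_mult n B C) i j" .
qed

lemma opmat_mult_id_left: "opmat_eq n (opmat_mult n opmat_id A) A"
proof -
  have "(if i = k then id_blinfun else 0) o\<^sub>L A k j = (if i = k then A k j else 0)" for i j k
    by simp
  then show ?thesis
    by (simp add: opmat_eq_def opmat_mult_def opmat_id_def)
qed

lemma opmat_mult_id_right: "opmat_eq n (opmat_mult n A opmat_id) A"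
proof -
  have "A i k o\<^sub>L (if k = j then id_blinfun else 0) = (if k = j then A i k else 0)" for i j k
    by simp
  then show ?thesis
    by (simp add: opmat_eq_def opmat_mult_def opmat_id_def)
qed

lemma opmat_mult_cong:
  "opmat_eq n A A' \<Longrightarrow> opmat_eq n B B' \<Longrightarrow> opmat_eq n (opmat_mult n A B) (opmat_mult n A' B')"
  by (simp add: opmat_eq_def opmat_mult_def)

lemma opmat_mult_cancel_right_inverse:
  assumes "opmat_eq n (opmat_mult n L M) opmat_id"
  shows "opmat_eq n (opmat_mult n L (opmat_mult n M B)) B"
proof -
  have "opmat_mult n L (opmat_mult n M B) = opmat_mult n (opmat_mult n L M) B"
    by (simp add: opmat_mult_assoc)
  also have "opmat_eq n \<dots> (opmat_mult n opmat_id B)"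
    by (rule opmat_mult_cong[OF assms opmat_eq_refl])
  also have "opmat_eq n \<dots> B"
    by (rule opmat_mult_id_left)
  finally show ?thesis .
qed

lemma opmat_adj_mult:
  fixes A B :: "'a::{real_inner,complete_space} opmat"
  shows "opmat_adj (opmat_mult n A B) = opmat_mult n (opmat_adj B) (opmat_adj A)"
  by (simp add: opmat_adj_def opmat_mult_def adj_sum adj_compose)

lemma opmat_adj_cong:
  fixes A B :: "'a::{real_inner,complete_space} opmat"
  shows "opmat_eq n A B \<Longrightarrow> opmat_eq n (opmat_adj A) (opmat_adj B)"
  by (simp add: opmat_eq_def opmat_adj_def)

lemma opmat_adj_id [simp]: "opmat_adj opmat_id = (opmat_id :: 'a::{real_inner,complete_space} opmat)"
  by (intro ext) (auto simp: opmat_adj_def opmat_id_def)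

lemma opmat_left_inverse_eq_right_inverse:
  assumes "opmat_eq n (opmat_mult n V U) opmat_id" "opmat_eq n (opmat_mult n U W) opmat_id"
  shows "opmat_eq n V W"
proof -
  have "opmat_eq n V (opmat_mult n V opmat_id)"
    by (rule opmat_eq_sym[OF opmat_mult_id_right])
  also have "opmat_eq n \<dots> (opmat_mult n V (opmat_mult n U W))"
    by (rule opmat_mult_cong[OF opmat_eq_refl opmat_eq_sym[OF assms(2)]])
  also have "\<dots> = opmat_mult n (opmat_mult n V U) W"
    by (simp add: opmat_mult_assoc)
  also have "opmat_eq n \<dots> (opmat_mult n opmat_id W)"
    by (rule opmat_mult_cong[OF assms(1) opmat_eq_refl])
  also have "opmat_eq n \<dots> W"
    by (rule opmat_mult_id_left)
  finally show ?thesis .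
qed

lemma opmat_inverse_sym: "opmat_inverse n L M \<Longrightarrow> opmat_inverse n M L"
  by (simp add: opmat_inverse_def)

lemma opmat_inverse_mult:
  assumes "opmat_inverse n A A'" "opmat_inverse n B B'"
  shows "opmat_inverse n (opmat_mult n A B) (opmat_mult n B' A')"
proof -
  have cancel: "opmat_eq n (opmat_mult n (opmat_mult n X Y) (opmat_mult n Y' X')) opmat_id"
    if "opmat_eq n (opmat_mult n X X') opmat_id" "opmat_eq n (opmat_mult n Y Y') opmat_id"
    for X X' Y Y' :: "'a opmat"
  proof -
    have "opmat_mult n (opmat_mult n X Y) (opmat_mult n Y' X')
        = opmat_mult n X (opmat_mult n Y (opmat_mult n Y' X'))"
      by (simp add: opmat_mult_assoc)
    also have "opmat_eq n \<dots> (opmat_mult n X X')"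
      by (rule opmat_mult_cong[OF opmat_eq_refl opmat_mult_cancel_right_inverse[OF that(2)]])
    also have "opmat_eq n \<dots> opmat_id"
      by (rule that(1))
    finally show ?thesis .
  qed
  show ?thesis
    using assms by (auto simp: opmat_inverse_def intro: cancel)
qed

lemma lower_triangular_cong:
  "opmat_eq n A B \<Longrightarrow> lower_triangular n A \<Longrightarrow> lower_triangular n B"
  by (simp add: opmat_eq_def lower_triangular_def)

lemma lower_triangular_mult:
  assumes "lower_triangular n A" "lower_triangular n B"
  shows "lower_triangular n (opmat_mult n A B)"
proof -
  have "A i k o\<^sub>L B k j = 0" if "i < n" "j < n" "k < n" "i < j" for i j k
    using assms that by (cases "i < k") (auto simp: lower_triangular_def)
  then show ?thesis
    by (simp add: lower_triangular_def opmat_mult_def)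
qed

lemma invertible_lower_triangular_mult:
  "invertible_lower_triangular n A \<Longrightarrow> invertible_lower_triangular n B \<Longrightarrow>
    invertible_lower_triangular n (opmat_mult n A B)"
  unfolding invertible_lower_triangular_def
  by (blast intro: lower_triangular_mult opmat_inverse_mult)

lemma opmat_mult_lower_triangular_diag:
  assumes "lower_triangular n A" "lower_triangular n B" "i < n"
  shows "opmat_mult n A B i i = A i i o\<^sub>L B i i"
proof -
  have "A i k o\<^sub>L B k i = 0" if "k < n" "k \<noteq> i" for k
    using assms that by (cases "i < k") (auto simp: lower_triangular_def)
  then have "opmat_mult n A B i i = (\<Sum>k\<in>{i}. A i k o\<^sub>L B k i)"
    unfolding opmat_mult_def using assms(3) by (intro sum.mono_neutral_right) auto
  then show ?thesis by simp
qed

lemma opmat_mult_diag: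
  "opmat_eq n (opmat_mult n (opmat_diag A) (opmat_diag B)) (opmat_diag (\<lambda>i j. A i i o\<^sub>L B i i))"
proof -
  have "(if i = k then A i i else 0) o\<^sub>L (if k = j then B k k else 0)
      = (if k = i then (if i = j then A i i o\<^sub>L B i i else 0) else 0)" for i j k
    by auto
  then show ?thesis
    by (simp add: opmat_eq_def opmat_mult_def opmat_diag_def)
qed

lemma opmat_diag_mult_lower_triangular:
  assumes "lower_triangular n A" "lower_triangular n B"
  shows "opmat_eq n (opmat_diag (opmat_mult n A B)) (opmat_mult n (opmat_diag A) (opmat_diag B))"
proof -
  have "opmat_eq n (opmat_diag (opmat_mult n A B)) (opmat_diag (\<lambda>i j. A i i o\<^sub>L B i i))"
    using opmat_mult_lower_triangular_diag[OF assms] by (simp add: opmat_eq_def opmat_diag_def)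
  then show ?thesis
    using opmat_eq_sym[OF opmat_mult_diag] by (rule opmat_eq_trans)
qed

lemma opmat_diag_cong: "opmat_eq n A B \<Longrightarrow> opmat_eq n (opmat_diag A) (opmat_diag B)"
  by (simp add: opmat_eq_def opmat_diag_def)

lemma opmat_diag_id [simp]: "opmat_diag opmat_id = opmat_id"
  by (simp add: fun_eq_iff opmat_diag_def opmat_id_def)

lemma opmat_inverse_diag:
  assumes "lower_triangular n L" "lower_triangular n M" "opmat_inverse n L M"
  shows "opmat_inverse n (opmat_diag L) (opmat_diag M)"
proof -
  have "opmat_eq n (opmat_mult n (opmat_diag A) (opmat_diag B)) opmat_id"
    if "lower_triangular n A" "lower_triangular n B" "opmat_eq n (opmat_mult n A B) opmat_id"
    for A B :: "'a opmat"
  proof -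
    have "opmat_eq n (opmat_mult n (opmat_diag A) (opmat_diag B)) (opmat_diag (opmat_mult n A B))"
      by (rule opmat_eq_sym[OF opmat_diag_mult_lower_triangular[OF that(1,2)]])
    also have "opmat_eq n \<dots> (opmat_diag opmat_id)"
      using that(3) by (rule opmat_diag_cong)
    finally show ?thesis by simp
  qed
  then show ?thesis
    using assms unfolding opmat_inverse_def by blast
qed

lemma diagonal_if_lower_triangular_adj:
  fixes U :: "'a::{real_inner,complete_space} opmat"
  assumes "lower_triangular n U" "lower_triangular n (opmat_adj U)"
  shows "opmat_eq n U (opmat_diag U)"
  unfolding opmat_eq_def opmat_diag_def
proof (intro allI impI)
  fix i j assume "i < n" "j < n"
  consider "i < j" | "i = j" | "j < i" by linarith
  then show "U i j = (if i = j then U i i else 0)"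
  proof cases
    case 1
    then show ?thesis using assms(1) \<open>i < n\<close> \<open>j < n\<close> by (simp add: lower_triangular_def)
  next
    case 3
    then have "adj (U i j) = 0"
      using assms(2) \<open>i < n\<close> \<open>j < n\<close> by (simp add: lower_triangular_def opmat_adj_def)
    then show ?thesis using 3 by simp
  qed simp
qed

lemma diagonal_if_coisometry_invertible_lower_triangular:
  fixes U :: "'a::{real_inner,complete_space} opmat"
  assumes "invertible_lower_triangular n U"
    and "opmat_eq n (opmat_mult n U (opmat_adj U)) opmat_id"
  shows "opmat_eq n U (opmat_diag U)"
proof -
  obtain V where V: "lower_triangular n V" "opmat_inverse n U V"
    using assms(1) unfolding invertible_lower_triangular_def by blast
  then have "opmat_eq n V (opmat_adj U)"
    using assms(2) opmat_left_inverse_eq_right_inverse unfolding opmat_inverse_def by blast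
  then have "lower_triangular n (opmat_adj U)"
    using V(1) by (rule lower_triangular_cong)
  then show ?thesis
    using assms(1) diagonal_if_lower_triangular_adj unfolding invertible_lower_triangular_def by blast
qed

lemma opmat_mult_adj_eq_id_if_gram_eq:
  fixes K L M :: "'a::{real_inner,complete_space} opmat"
  assumes "opmat_eq n (opmat_mult n M L) opmat_id"
    and "opmat_eq n (opmat_mult n L (opmat_adj L)) (opmat_mult n K (opmat_adj K))"
  shows "opmat_eq n (opmat_mult n (opmat_mult n M K) (opmat_adj (opmat_mult n M K))) opmat_id"
proof -
  have "opmat_mult n (opmat_mult n M K) (opmat_adj (opmat_mult n M K))
      = opmat_mult n M (opmat_mult n (opmat_mult n K (opmat_adj K)) (opmat_adj M))"
    by (simp add: opmat_mult_assoc opmat_adj_mult)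
  also have "opmat_eq n \<dots> (opmat_mult n M (opmat_mult n (opmat_mult n L (opmat_adj L)) (opmat_adj M)))"
    by (rule opmat_mult_cong[OF opmat_eq_refl opmat_mult_cong[OF opmat_eq_sym[OF assms(2)] opmat_eq_refl]])
  also have "\<dots> = opmat_mult n (opmat_mult n M L) (opmat_adj (opmat_mult n M L))"
    by (simp add: opmat_mult_assoc opmat_adj_mult)
  also have "opmat_eq n \<dots> (opmat_mult n opmat_id (opmat_adj opmat_id))"
    by (rule opmat_mult_cong[OF assms(1) opmat_adj_cong[OF assms(1)]])
  also have "opmat_eq n \<dots> opmat_id"
    using opmat_mult_id_left by simp
  finally show ?thesis .
qed

theorem lemma4:
  fixes L1 L2 :: "'a::{real_inner,complete_space} opmat" and n :: nat
  assumes "invertible_lower_triangular n L1"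
    and "invertible_lower_triangular n L2"
    and "opmat_eq n (opmat_mult n L1 (opmat_adj L1)) (opmat_mult n L2 (opmat_adj L2))"
  shows "\<exists>D. opmat_inverse n (opmat_diag L1) D \<and>
           opmat_eq n L2 (opmat_mult n (opmat_mult n L1 D) (opmat_diag L2))"
proof -
  obtain M1 where M1: "lower_triangular n M1" "opmat_inverse n L1 M1"
    using assms(1) unfolding invertible_lower_triangular_def by blast
  have "invertible_lower_triangular n M1"
    using M1 assms(1) opmat_inverse_sym unfolding invertible_lower_triangular_def by blast
  define U where "U = opmat_mult n M1 L2"
  have "invertible_lower_triangular n U"
    unfolding U_def using \<open>invertible_lower_triangular n M1\<close> assms(2)
    by (rule invertible_lower_triangular_mult)
  moreover have "opmat_eq n (opmat_mult n U (opmat_adj U)) opmat_id"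
    unfolding U_def using M1(2) assms(3) opmat_mult_adj_eq_id_if_gram_eq
    unfolding opmat_inverse_def by blast
  ultimately have "opmat_eq n U (opmat_diag U)"
    by (rule diagonal_if_coisometry_invertible_lower_triangular)
  also have "opmat_eq n \<dots> (opmat_mult n (opmat_diag M1) (opmat_diag L2))"
    unfolding U_def using M1(1) assms(2)
    by (intro opmat_diag_mult_lower_triangular) (simp_all add: invertible_lower_triangular_def)
  finally have U_diag: "opmat_eq n U (opmat_mult n (opmat_diag M1) (opmat_diag L2))" .
  have "opmat_eq n L2 (opmat_mult n L1 U)"
    unfolding U_def
    by (rule opmat_eq_sym[OF opmat_mult_cancel_right_inverse]) (use M1(2) in \<open>simp add: opmat_inverse_def\<close>)
  also have "opmat_eq n \<dots> (opmat_mult n L1 (opmat_mult n (opmat_diag M1) (opmat_diag L2)))"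
    by (rule opmat_mult_cong[OF opmat_eq_refl U_diag])
  also have "\<dots> = opmat_mult n (opmat_mult n L1 (opmat_diag M1)) (opmat_diag L2)"
    by (simp add: opmat_mult_assoc)
  finally show ?thesis
    using opmat_inverse_diag[OF _ M1] assms(1) unfolding invertible_lower_triangular_def by blast
qed

end
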